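(* Let $\phi=(\phi_g,X_g,X)_{g\in G}$ be a partial action of a group $G$ on a set $X$ and let $\psi:G\to H$ be a group homomorphism. For $h\in H$ put $X_h:=\bigcup_{g\in G,\ \psi(g)=h}X_g$ and $\overline{\phi}_h:X_{h^{-1}}\to X_h$, $\overline{\phi}_h(x):=\phi_g(x)$ whenever $\psi(g)=h$ and $x\in X_{g^{-1}}$. Then these data give a well-defined partial action $\overline{\phi}=(\overline{\phi}_h,X_h,X)_{h\in H}$ of $H$ on $X$ if and only if for every $g\in\ker\psi$ one has $X_g=X_{g^{-1}}$ and $\phi_g=\operatorname{id}$ (on $X_{g^{-1}}$).
   Context: A partial action of a group $G$ (identity $\varepsilon$) on a set $X$ is $\phi=(\phi_g,X_g,X)_{g\in G}$ with $X_g\subseteq X$ and bijections $\phi_g:X_{g^{-1}}\to X_g$ such that (i) $X_\varepsilon=X$ and $\phi_\varepsilon=\operatorname{id}_X$; (ii) $\phi_g(X_{g^{-1}}\cap X_h)=X_g\cap X_{gh}$ for all $g,h$; (iii) $\phi_g(\phi_h(x))=\phi_{gh}(x)$ for all $g,h$ and $x\in X_{h^{-1}}\cap X_{h^{-1}g^{-1}}$. *)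

theory Defs
  imports "HOL-Algebra.Group"
begin

definition partial_action ::
  "('g, 'm) monoid_scheme \<Rightarrow> 'x set \<Rightarrow> ('g \<Rightarrow> 'x set) \<Rightarrow> ('g \<Rightarrow> 'x \<Rightarrow> 'x) \<Rightarrow> bool" where
  "partial_action G X D f \<longleftrightarrow>
     (\<forall>g\<in>carrier G. D g \<subseteq> X \<and> bij_betw (f g) (D (inv\<^bsub>G\<^esub> g)) (D g)) \<and>
     D \<one>\<^bsub>G\<^esub> = X \<and> (\<forall>x\<in>X. f \<one>\<^bsub>G\<^esub> x = x) \<and>
     (\<forall>g\<in>carrier G. \<forall>h\<in>carrier G.
        f g ` (D (inv\<^bsub>G\<^esub> g) \<inter> D h) = D g \<inter> D (g \<otimes>\<^bsub>G\<^esub> h)) \<and>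
     (\<forall>g\<in>carrier G. \<forall>h\<in>carrier G.
        \<forall>x \<in> D (inv\<^bsub>G\<^esub> h) \<inter> D (inv\<^bsub>G\<^esub> h \<otimes>\<^bsub>G\<^esub> inv\<^bsub>G\<^esub> g).
          f g (f h x) = f (g \<otimes>\<^bsub>G\<^esub> h) x)"

definition induced_dom ::
  "('g, 'm) monoid_scheme \<Rightarrow> ('g \<Rightarrow> 'h) \<Rightarrow> ('g \<Rightarrow> 'x set) \<Rightarrow> 'h \<Rightarrow> 'x set" where
  "induced_dom G \<psi> D h = (\<Union>g\<in>{g\<in>carrier G. \<psi> g = h}. D g)"

definition induced_well_defined ::
  "('g, 'm) monoid_scheme \<Rightarrow> ('g \<Rightarrow> 'h) \<Rightarrow> ('g \<Rightarrow> 'x set) \<Rightarrow> ('g \<Rightarrow> 'x \<Rightarrow> 'x) \<Rightarrow> bool" where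
  "induced_well_defined G \<psi> D f \<longleftrightarrow>
     (\<forall>g1\<in>carrier G. \<forall>g2\<in>carrier G. \<psi> g1 = \<psi> g2 \<longrightarrow>
        (\<forall>x \<in> D (inv\<^bsub>G\<^esub> g1) \<inter> D (inv\<^bsub>G\<^esub> g2). f g1 x = f g2 x))"

definition induced_map ::
  "('g, 'm) monoid_scheme \<Rightarrow> ('g \<Rightarrow> 'h) \<Rightarrow> ('g \<Rightarrow> 'x set) \<Rightarrow> ('g \<Rightarrow> 'x \<Rightarrow> 'x) \<Rightarrow> 'h \<Rightarrow> 'x \<Rightarrow> 'x" where
  "induced_map G \<psi> D f h x =
     f (SOME g. g \<in> carrier G \<and> \<psi> g = h \<and> x \<in> D (inv\<^bsub>G\<^esub> g)) x"

end

theory Submission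
  imports Defs
begin

text \<open>
  If every \<open>g \<in> ker \<psi>\<close> acts as the identity on \<open>X\<^sub>g = X\<^sub>g\<^sub>\<^sup>-\<^sup>1\<close>, two lifts
  \<open>g\<^sub>1, g\<^sub>2\<close> of the same element of \<open>H\<close> differ by the kernel element \<open>m = g\<^sub>2 g\<^sub>1\<^sup>-\<^sup>1\<close>,
  and \<open>\<phi>\<^bsub>g\<^sub>2\<^esub> x = \<phi>\<^sub>m (\<phi>\<^bsub>g\<^sub>1\<^esub> x) = \<phi>\<^bsub>g\<^sub>1\<^esub> x\<close>, so \<open>\<overline>\<phi>\<close> is well defined.
  Conversely, well-definedness compares \<open>\<phi>\<^sub>g\<close> with \<open>\<phi>\<^sub>1 = id\<close> for \<open>g \<in> ker \<psi>\<close>, and then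
  \<open>X\<^sub>g = \<phi>\<^sub>g(X\<^sub>g\<^sub>\<^sup>-\<^sup>1) = X\<^sub>g\<^sub>\<^sup>-\<^sup>1\<close>. Well-definedness alone already makes \<open>\<overline>\<phi>\<close> a
  partial action: each axiom for elements of \<open>H\<close> is the corresponding axiom of \<open>\<phi>\<close>
  applied to suitable lifts to \<open>G\<close>.
\<close>

lemma induced_well_definedD:
  assumes "induced_well_defined G \<psi> D f" "g\<^sub>1 \<in> carrier G" "g\<^sub>2 \<in> carrier G" "\<psi> g\<^sub>1 = \<psi> g\<^sub>2"
    "x \<in> D (inv\<^bsub>G\<^esub> g\<^sub>1)" "x \<in> D (inv\<^bsub>G\<^esub> g\<^sub>2)"
  shows "f g\<^sub>1 x = f g\<^sub>2 x"
  using assms unfolding induced_well_defined_def by blast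

locale group_partial_action = G: group G for G (structure) +
  fixes X :: "'x set" and D :: "'g \<Rightarrow> 'x set" and f :: "'g \<Rightarrow> 'x \<Rightarrow> 'x"
  assumes partial_action: "partial_action G X D f"
begin

lemma dom_subset: "g \<in> carrier G \<Longrightarrow> D g \<subseteq> X"
  using partial_action by (simp add: partial_action_def)

lemma bij_betw_map: "g \<in> carrier G \<Longrightarrow> bij_betw (f g) (D (inv g)) (D g)"
  using partial_action by (simp add: partial_action_def)

lemma map_in_dom: "g \<in> carrier G \<Longrightarrow> x \<in> D (inv g) \<Longrightarrow> f g x \<in> D g"
  using bij_betw_apply bij_betw_map by metis

lemma dom_one: "D \<one> = X"
  using partial_action by (simp add: partial_action_def)

lemma map_one: "x \<in> X \<Longrightarrow> f \<one> x = x"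
  using partial_action by (simp add: partial_action_def)

lemma map_image_dom_inter:
  "g \<in> carrier G \<Longrightarrow> h \<in> carrier G \<Longrightarrow> f g ` (D (inv g) \<inter> D h) = D g \<inter> D (g \<otimes> h)"
  using partial_action by (simp add: partial_action_def)

lemma map_map:
  assumes "g \<in> carrier G" "h \<in> carrier G" "x \<in> D (inv h)" "x \<in> D (inv h \<otimes> inv g)"
  shows "f g (f h x) = f (g \<otimes> h) x"
  using partial_action assms by (simp add: partial_action_def)

lemma map_map_inv:
  assumes g: "g \<in> carrier G" and y: "y \<in> D g"
  shows "f g (f (inv g) y) = y"
proof -
  have "y \<in> X" using dom_subset g y by blast
  then have "f g (f (inv g) y) = f (g \<otimes> inv g) y"
    using map_map g y by (simp add: dom_one)
  also have "\<dots> = y" using g \<open>y \<in> X\<close> by (simp add: map_one)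
  finally show ?thesis .
qed

end

locale partial_action_hom = group_partial_action G X D f + group_hom G H \<psi>
  for G (structure) and H (structure) and X D f \<psi>
begin

abbreviation "Dbar \<equiv> induced_dom G \<psi> D"
abbreviation "fbar \<equiv> induced_map G \<psi> D f"

lemma mem_induced_dom: "y \<in> Dbar h \<longleftrightarrow> (\<exists>g\<in>carrier G. \<psi> g = h \<and> y \<in> D g)"
  by (auto simp: induced_dom_def)

lemma mem_induced_dom_inv:
  assumes h: "h \<in> carrier H"
  shows "x \<in> Dbar (inv\<^bsub>H\<^esub> h) \<longleftrightarrow> (\<exists>g\<in>carrier G. \<psi> g = h \<and> x \<in> D (inv g))"
proof
  assume "x \<in> Dbar (inv\<^bsub>H\<^esub> h)"
  then obtain g where "g \<in> carrier G" "\<psi> g = inv\<^bsub>H\<^esub> h" "x \<in> D g"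
    by (auto simp: mem_induced_dom)
  with h show "\<exists>g\<in>carrier G. \<psi> g = h \<and> x \<in> D (inv g)"
    by (intro bexI[of _ "inv g"]) auto
next
  assume "\<exists>g\<in>carrier G. \<psi> g = h \<and> x \<in> D (inv g)"
  then obtain g where "g \<in> carrier G" "\<psi> g = h" "x \<in> D (inv g)" by blast
  then show "x \<in> Dbar (inv\<^bsub>H\<^esub> h)"
    by (auto simp: mem_induced_dom intro!: bexI[of _ "inv g"])
qed

lemma kernel_acts_trivially_if_well_defined:
  assumes wd: "induced_well_defined G \<psi> D f"
    and g: "g \<in> carrier G" and ker: "\<psi> g = \<one>\<^bsub>H\<^esub>"
  shows "D g = D (inv g) \<and> (\<forall>x \<in> D (inv g). f g x = x)"
proof -
  have fix_points: "f g x = x" if x: "x \<in> D (inv g)" for x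
  proof -
    have "x \<in> X" using dom_subset g x by blast
    then have "f g x = f \<one> x"
      using induced_well_definedD[OF wd g G.one_closed] x ker by (simp add: dom_one)
    with \<open>x \<in> X\<close> show ?thesis by (simp add: map_one)
  qed
  have "D (inv g) \<subseteq> X" using dom_subset g by simp
  then have "D g = f g ` D (inv g)"
    using map_image_dom_inter[OF g G.one_closed] g by (simp add: dom_one Int_absorb2)
  also have "\<dots> = D (inv g)" using fix_points by simp
  finally show ?thesis using fix_points by blast
qed

lemma well_defined_if_kernel_acts_trivially:
  assumes ker: "\<forall>g\<in>carrier G. \<psi> g = \<one>\<^bsub>H\<^esub> \<longrightarrow> D g = D (inv g) \<and> (\<forall>x \<in> D (inv g). f g x = x)"
  shows "induced_well_defined G \<psi> D f"
  unfolding induced_well_defined_def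
proof (intro ballI impI)
  fix g1 g2 x
  assume g1: "g1 \<in> carrier G" and g2: "g2 \<in> carrier G" and eq: "\<psi> g1 = \<psi> g2"
    and x: "x \<in> D (inv g1) \<inter> D (inv g2)"
  define m where "m = g2 \<otimes> inv g1"
  have m: "m \<in> carrier G" "\<psi> m = \<one>\<^bsub>H\<^esub>" "inv m = g1 \<otimes> inv g2"
    using g1 g2 eq by (simp_all add: m_def G.inv_mult_group)
  have "f g1 x \<in> D (inv m)"
    using map_image_dom_inter[OF g1, of "inv g2"] g2 x m by auto
  moreover have "\<forall>y \<in> D (inv m). f m y = y" using ker m by blast
  ultimately have "f g1 x = f m (f g1 x)" by simp
  also have "\<dots> = f (m \<otimes> g1) x"
  proof (rule map_map[OF m(1) g1])
    have "inv g1 \<otimes> inv m = inv g2" using g1 g2 m(3) by (simp flip: G.m_assoc)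
    then show "x \<in> D (inv g1 \<otimes> inv m)" using x by simp
  qed (use x in blast)
  also have "m \<otimes> g1 = g2" using g1 g2 by (simp add: m_def G.m_assoc)
  finally show "f g1 x = f g2 x" .
qed

context
  assumes wd: "induced_well_defined G \<psi> D f"
begin

lemma induced_map_lift:
  assumes g: "g \<in> carrier G" "\<psi> g = h" and x: "x \<in> D (inv g)"
  shows "fbar h x = f g x"
  unfolding induced_map_def
proof (rule someI2[where P = "\<lambda>g'. g' \<in> carrier G \<and> \<psi> g' = h \<and> x \<in> D (inv g')"])
  show "g \<in> carrier G \<and> \<psi> g = h \<and> x \<in> D (inv g)" using g x by blast
  show "f g' x = f g x" if "g' \<in> carrier G \<and> \<psi> g' = h \<and> x \<in> D (inv g')" for g'
    using that g x by (metis induced_well_definedD[OF wd])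
qed

lemma induced_dom_subset: "Dbar h \<subseteq> X"
  using dom_subset by (auto simp: induced_dom_def)

lemma induced_dom_one: "Dbar \<one>\<^bsub>H\<^esub> = X"
proof (rule equalityI[OF induced_dom_subset])
  show "X \<subseteq> Dbar \<one>\<^bsub>H\<^esub>"
  proof
    fix x assume "x \<in> X"
    then show "x \<in> Dbar \<one>\<^bsub>H\<^esub>"
      unfolding mem_induced_dom using dom_one G.one_closed hom_one by blast
  qed
qed

lemma induced_map_one:
  assumes "x \<in> X" shows "fbar \<one>\<^bsub>H\<^esub> x = x"
proof -
  have "x \<in> D (inv \<one>)" using assms by (simp add: dom_one)
  then have "fbar \<one>\<^bsub>H\<^esub> x = f \<one> x" by (rule induced_map_lift[OF G.one_closed hom_one])
  with assms show ?thesis by (simp add: map_one)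
qed

lemma induced_map_in_induced_dom:
  assumes h: "h \<in> carrier H" and x: "x \<in> Dbar (inv\<^bsub>H\<^esub> h)"
  shows "fbar h x \<in> Dbar h"
proof -
  obtain g where g: "g \<in> carrier G" "\<psi> g = h" "x \<in> D (inv g)"
    using x unfolding mem_induced_dom_inv[OF h] by blast
  have "fbar h x \<in> D g" using induced_map_lift[OF g] map_in_dom[OF g(1,3)] by simp
  then show ?thesis unfolding mem_induced_dom using g by blast
qed

lemma induced_map_inv_cancel:
  assumes h: "h \<in> carrier H" and x: "x \<in> Dbar (inv\<^bsub>H\<^esub> h)"
  shows "fbar (inv\<^bsub>H\<^esub> h) (fbar h x) = x"
proof -
  obtain g where g: "g \<in> carrier G" "\<psi> g = h" "x \<in> D (inv g)"
    using x unfolding mem_induced_dom_inv[OF h] by blast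
  have "f g x \<in> D (inv (inv g))" using map_in_dom[OF g(1,3)] g(1) by simp
  moreover have "\<psi> (inv g) = inv\<^bsub>H\<^esub> h" using g by simp
  ultimately have "fbar (inv\<^bsub>H\<^esub> h) (fbar h x) = f (inv g) (f g x)"
    using induced_map_lift[OF g] induced_map_lift[of "inv g"] g(1) by simp
  also have "\<dots> = x" using map_map_inv[of "inv g" x] g by simp
  finally show ?thesis .
qed

lemma bij_betw_induced_map:
  assumes h: "h \<in> carrier H"
  shows "bij_betw (fbar h) (Dbar (inv\<^bsub>H\<^esub> h)) (Dbar h)"
proof (rule bij_betw_byWitness[where f' = "fbar (inv\<^bsub>H\<^esub> h)"])
  have h': "inv\<^bsub>H\<^esub> h \<in> carrier H" "inv\<^bsub>H\<^esub> (inv\<^bsub>H\<^esub> h) = h" using h by simp_all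
  show "\<forall>x \<in> Dbar (inv\<^bsub>H\<^esub> h). fbar (inv\<^bsub>H\<^esub> h) (fbar h x) = x"
    using induced_map_inv_cancel[OF h] by blast
  show "\<forall>y \<in> Dbar h. fbar h (fbar (inv\<^bsub>H\<^esub> h) y) = y"
    using induced_map_inv_cancel[OF h'(1)] h'(2) by simp
  show "fbar h ` Dbar (inv\<^bsub>H\<^esub> h) \<subseteq> Dbar h"
    using induced_map_in_induced_dom[OF h] by blast
  show "fbar (inv\<^bsub>H\<^esub> h) ` Dbar h \<subseteq> Dbar (inv\<^bsub>H\<^esub> h)"
    using induced_map_in_induced_dom[OF h'(1)] h'(2) by auto
qed

lemma induced_map_image_dom_inter:
  assumes h: "h \<in> carrier H" and k: "k \<in> carrier H"
  shows "fbar h ` (Dbar (inv\<^bsub>H\<^esub> h) \<inter> Dbar k) = Dbar h \<inter> Dbar (h \<otimes>\<^bsub>H\<^esub> k)"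
proof (intro equalityI subsetI)
  fix y assume "y \<in> fbar h ` (Dbar (inv\<^bsub>H\<^esub> h) \<inter> Dbar k)"
  then obtain x where y: "y = fbar h x" and "x \<in> Dbar (inv\<^bsub>H\<^esub> h)" "x \<in> Dbar k" by blast
  then obtain a b where a: "a \<in> carrier G" "\<psi> a = h" "x \<in> D (inv a)"
    and b: "b \<in> carrier G" "\<psi> b = k" "x \<in> D b"
    unfolding mem_induced_dom_inv[OF h] mem_induced_dom[of _ k] by blast
  have "y \<in> f a ` (D (inv a) \<inter> D b)" using y a b induced_map_lift[OF a] by simp
  then have "y \<in> D a \<inter> D (a \<otimes> b)" using map_image_dom_inter[OF a(1) b(1)] by simp
  moreover have "\<psi> (a \<otimes> b) = h \<otimes>\<^bsub>H\<^esub> k" using a b by simp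
  ultimately show "y \<in> Dbar h \<inter> Dbar (h \<otimes>\<^bsub>H\<^esub> k)"
    unfolding Int_iff mem_induced_dom using a b G.m_closed by blast
next
  fix y assume "y \<in> Dbar h \<inter> Dbar (h \<otimes>\<^bsub>H\<^esub> k)"
  then obtain a c where a: "a \<in> carrier G" "\<psi> a = h" "y \<in> D a"
    and c: "c \<in> carrier G" "\<psi> c = h \<otimes>\<^bsub>H\<^esub> k" "y \<in> D c"
    by (auto simp: mem_induced_dom)
  define b where "b = inv a \<otimes> c"
  have b: "b \<in> carrier G" "\<psi> b = k" "a \<otimes> b = c"
    using a c h k by (simp_all add: b_def G.m_assoc[symmetric] H.m_assoc[symmetric])
  have "y \<in> f a ` (D (inv a) \<inter> D b)"
    using map_image_dom_inter[OF a(1) b(1)] a c b by simp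
  then obtain x where x: "x \<in> D (inv a)" "x \<in> D b" and "y = f a x" by blast
  then have "y = fbar h x" using induced_map_lift[OF a(1,2) x(1)] by simp
  moreover have "x \<in> Dbar (inv\<^bsub>H\<^esub> h)"
    unfolding mem_induced_dom_inv[OF h] using a x by blast
  moreover have "x \<in> Dbar k"
    unfolding mem_induced_dom using b x by blast
  ultimately show "y \<in> fbar h ` (Dbar (inv\<^bsub>H\<^esub> h) \<inter> Dbar k)" by blast
qed

lemma induced_map_map:
  assumes h: "h \<in> carrier H" and k: "k \<in> carrier H"
    and x: "x \<in> Dbar (inv\<^bsub>H\<^esub> k)" "x \<in> Dbar (inv\<^bsub>H\<^esub> k \<otimes>\<^bsub>H\<^esub> inv\<^bsub>H\<^esub> h)"
  shows "fbar h (fbar k x) = fbar (h \<otimes>\<^bsub>H\<^esub> k) x"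
proof -
  obtain b where b: "b \<in> carrier G" "\<psi> b = k" "x \<in> D (inv b)"
    using x(1) unfolding mem_induced_dom_inv[OF k] by blast
  have "x \<in> Dbar (inv\<^bsub>H\<^esub> (h \<otimes>\<^bsub>H\<^esub> k))" using x(2) h k by (simp add: H.inv_mult_group)
  then obtain c where c: "c \<in> carrier G" "\<psi> c = h \<otimes>\<^bsub>H\<^esub> k" "x \<in> D (inv c)"
    unfolding mem_induced_dom_inv[OF H.m_closed[OF h k]] by blast
  define a where "a = c \<otimes> inv b"
  have a: "a \<in> carrier G" "\<psi> a = h" "a \<otimes> b = c" "inv b \<otimes> inv a = inv c" "b \<otimes> inv c = inv a"
    using b c h k by (simp_all add: a_def G.m_assoc G.inv_mult_group H.m_assoc flip: G.m_assoc[of "inv b"])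
  have "f b x \<in> D (inv a)"
    using map_image_dom_inter[OF b(1) G.inv_closed[OF c(1)]] a b c by auto
  then have "fbar h (fbar k x) = f a (f b x)"
    using induced_map_lift[OF a(1,2)] induced_map_lift[OF b] by simp
  also have "\<dots> = f c x"
    using map_map[OF a(1) b(1) b(3)] a c by simp
  also have "\<dots> = fbar (h \<otimes>\<^bsub>H\<^esub> k) x"
    using induced_map_lift[OF c] by simp
  finally show ?thesis .
qed

lemma induced_partial_action: "partial_action H X Dbar fbar"
  unfolding partial_action_def
  by (simp add: induced_dom_subset bij_betw_induced_map induced_dom_one induced_map_one
      induced_map_image_dom_inter induced_map_map)

end

end

theorem mainTheorem2:
  fixes G :: "('g, 'a) monoid_scheme" and H :: "('h, 'b) monoid_scheme"
    and X :: "'x set" and D :: "'g \<Rightarrow> 'x set" and f :: "'g \<Rightarrow> 'x \<Rightarrow> 'x"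
    and \<psi> :: "'g \<Rightarrow> 'h"
  assumes "group G" and "group H" and "partial_action G X D f" and "\<psi> \<in> hom G H"
  shows "(induced_well_defined G \<psi> D f \<and>
          partial_action H X (induced_dom G \<psi> D) (induced_map G \<psi> D f))
     \<longleftrightarrow> (\<forall>g\<in>carrier G. \<psi> g = \<one>\<^bsub>H\<^esub> \<longrightarrow>
            D g = D (inv\<^bsub>G\<^esub> g) \<and> (\<forall>x \<in> D (inv\<^bsub>G\<^esub> g). f g x = x))"
proof -
  interpret partial_action_hom G H X D f \<psi>
    using assms by (simp add: partial_action_hom_def group_partial_action_def
        group_partial_action_axioms_def group_hom_def group_hom_axioms_def)
  show ?thesis
    using kernel_acts_trivially_if_well_defined well_defined_if_kernel_acts_trivially
      induced_partial_action
    by meson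
qed

end
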